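(* Let $p,q$ be distinct propositional letters and let $M_{pq}=(W,V_{pq})$ be the model with $W=\{w_1,w_2,w_3\}$ in which $p$ is true exactly at $w_1,w_2$, $q$ is true exactly at $w_2,w_3$, and every other letter is true at no world. Let $\varphi(a,b)$ be a context (of propositional dependence logic $\mathcal D$) in which $p,q$ do not occur, and let $\varphi(=\!(p),=\!(q))$ be obtained by replacing $a$ with $=\!(p)$ and $b$ with $=\!(q)$. Then $\varphi(=\!(p),=\!(q))$ is equivalent in $M_{pq}$ to one of: $\top$; $(=\!(p)\land=\!(q))\otimes(=\!(p)\land=\!(q))$; $=\!(p)$; $=\!(q)$; $=\!(p)\land=\!(q)$; $\bot$.
   Context: Formulas of $\mathcal D$: $\varphi::= p\mid\neg p\mid\bot\mid=\!(p_1,\dots,p_n;q)\mid\varphi\land\varphi\mid\varphi\otimes\varphi$ with $p,q,p_i$ propositional letters ($n\ge0$; for $n=0$ the atom is written $=\!(q)$). A context $\varphi(a,b)$ is a $\mathcal D$ formula in which the letters $a,b$ do not occur negated nor inside a dependence atom. A model is $M=(W,V)$, $V(w)$ the set of letters true at $w$. Support at $s\subseteq W$: $s\models p$ iff $p$ true at all $w\in s$; $s\models\neg p$ iff $p$ false at all $w\in s$; $s\models\bot$ iff $s=\emptyset$; $s\models\psi\land\chi$ iff both; $s\models\psi\otimes\chi$ iff $s=t_1\cup t_2$ with $t_1\models\psi$, $t_2\models\chi$; $s\models=\!(p_1,\dots,p_n;q)$ iff any two worlds of $s$ agreeing on all $p_i$ agree on $q$ (so $s\models=\!(q)$ iff $q$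 has the same value throughout $s$). $\top$ denotes a formula supported by every state (in $\mathcal D$, $p\otimes\neg p$). Equivalence in $M$ means being supported by the same states of $M$. *)

theory Defs
  imports Main
begin

datatype 'a form =
    Atom 'a
  | NAtom 'a
  | Bot
  | Dep "'a list" 'a
  | Conj "'a form" "'a form"
  | Tensor "'a form" "'a form"

fun supp :: "('w \<Rightarrow> 'a set) \<Rightarrow> 'w set \<Rightarrow> 'a form \<Rightarrow> bool" where
  "supp V s (Atom p) = (\<forall>w\<in>s. p \<in> V w)"
| "supp V s (NAtom p) = (\<forall>w\<in>s. p \<notin> V w)"
| "supp V s Bot = (s = {})"
| "supp V s (Dep ps q) =
     (\<forall>w\<in>s. \<forall>v\<in>s. (\<forall>x\<in>set ps. (x \<in> V w) = (x \<in> V v)) \<longrightarrow> ((q \<in> V w) = (q \<in> V v)))"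
| "supp V s (Conj f g) = (supp V s f \<and> supp V s g)"
| "supp V s (Tensor f g) = (\<exists>t1 t2. s = t1 \<union> t2 \<and> supp V t1 f \<and> supp V t2 g)"

definition equiv_in :: "'w set \<Rightarrow> ('w \<Rightarrow> 'a set) \<Rightarrow> 'a form \<Rightarrow> 'a form \<Rightarrow> bool" where
  "equiv_in W V f g = (\<forall>s. s \<subseteq> W \<longrightarrow> (supp V s f = supp V s g))"

fun letters :: "'a form \<Rightarrow> 'a set" where
  "letters (Atom p) = {p}"
| "letters (NAtom p) = {p}"
| "letters Bot = {}"
| "letters (Dep ps q) = insert q (set ps)"
| "letters (Conj f g) = letters f \<union> letters g"
| "letters (Tensor f g) = letters f \<union> letters g"

text \<open>phi is a context in a,b: a,b do not occur negated nor inside a dependence atom.\<close>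
fun is_context :: "'a \<Rightarrow> 'a \<Rightarrow> 'a form \<Rightarrow> bool" where
  "is_context a b (Atom p) = True"
| "is_context a b (NAtom p) = (p \<noteq> a \<and> p \<noteq> b)"
| "is_context a b Bot = True"
| "is_context a b (Dep ps q) = (a \<notin> insert q (set ps) \<and> b \<notin> insert q (set ps))"
| "is_context a b (Conj f g) = (is_context a b f \<and> is_context a b g)"
| "is_context a b (Tensor f g) = (is_context a b f \<and> is_context a b g)"

fun subst2 :: "'a \<Rightarrow> 'a \<Rightarrow> 'a form \<Rightarrow> 'a form \<Rightarrow> 'a form \<Rightarrow> 'a form" where
  "subst2 a b psi chi (Atom p) = (if p = a then psi else if p = b then chi else Atom p)"
| "subst2 a b psi chi (NAtom p) = NAtom p"
| "subst2 a b psi chi Bot = Bot"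
| "subst2 a b psi chi (Dep ps q) = Dep ps q"
| "subst2 a b psi chi (Conj f g) = Conj (subst2 a b psi chi f) (subst2 a b psi chi g)"
| "subst2 a b psi chi (Tensor f g) = Tensor (subst2 a b psi chi f) (subst2 a b psi chi g)"

abbreviation const_atom :: "'a \<Rightarrow> 'a form" where
  "const_atom q \<equiv> Dep [] q"

text \<open>The tautology top, rendered in D as p \<otimes> \<not>p.\<close>
definition top_form :: "'a \<Rightarrow> 'a form" where
  "top_form p = Tensor (Atom p) (NAtom p)"

definition W_pq :: "nat set" where
  "W_pq = {1, 2, 3}"

definition V_pq :: "'a \<Rightarrow> 'a \<Rightarrow> nat \<Rightarrow> 'a set" where
  "V_pq p q w = (if w \<in> {1,2} then {p} else {}) \<union> (if w \<in> {2,3} then {q} else {})"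

end

theory Submission
  imports Defs
begin

text \<open>A team of M_pq is a subset of three worlds, so the meaning of a formula in M_pq is a
predicate on three booleans (which worlds the team contains). Conjunction acts on these
predicates pointwise and the tensor as a union product. Letters other than p and q are false
everywhere, so a literal or dependence atom of the context not mentioning a or b means
either the empty team or every team. The six predicates of the theorem contain these two
and the meanings of =(p) and =(q), and they are closed under both operations; induction
on the context does the rest.\<close>

definition team3 :: "bool \<Rightarrow> bool \<Rightarrow> bool \<Rightarrow> nat set" where
  "team3 x y z = (if x then {1} else {}) \<union> (if y then {2} else {}) \<union> (if z then {3} else {})"

lemma team3_subset_W_pq: "team3 x y z \<subseteq> W_pq"
  by (auto simp: team3_def W_pq_def)

lemma subset_W_pq_eq_team3: "s \<subseteq> W_pq \<Longrightarrow> s = team3 (1 \<in> s) (2 \<in> s) (3 \<in> s)"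
  by (auto simp: team3_def W_pq_def)

lemma team3_memberships:
  "1 \<in> team3 x y z \<longleftrightarrow> x" "2 \<in> team3 x y z \<longleftrightarrow> y" "3 \<in> team3 x y z \<longleftrightarrow> z"
  by (auto simp: team3_def)

lemma team3_Un: "team3 x y z \<union> team3 x' y' z' = team3 (x \<or> x') (y \<or> y') (z \<or> z')"
  by (auto simp: team3_def)

lemma team3_eq_empty_iff: "team3 x y z = {} \<longleftrightarrow> \<not> x \<and> \<not> y \<and> \<not> z"
  by (auto simp: team3_def)

definition sem_pq :: "'a \<Rightarrow> 'a \<Rightarrow> 'a form \<Rightarrow> bool \<Rightarrow> bool \<Rightarrow> bool \<Rightarrow> bool" where
  "sem_pq p q F x y z = supp (V_pq p q) (team3 x y z) F"

lemma equiv_in_W_pq_iff_sem_pq_eq: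
  "equiv_in W_pq (V_pq p q) F G \<longleftrightarrow> sem_pq p q F = sem_pq p q G"
  unfolding equiv_in_def sem_pq_def fun_eq_iff
  by (metis team3_subset_W_pq subset_W_pq_eq_team3)

definition tensor3 ::
    "(bool \<Rightarrow> bool \<Rightarrow> bool \<Rightarrow> bool) \<Rightarrow> (bool \<Rightarrow> bool \<Rightarrow> bool \<Rightarrow> bool) \<Rightarrow> bool \<Rightarrow> bool \<Rightarrow> bool \<Rightarrow> bool"
  where "tensor3 f g x y z =
    (\<exists>x1 y1 z1 x2 y2 z2. x = (x1 \<or> x2) \<and> y = (y1 \<or> y2) \<and> z = (z1 \<or> z2)
       \<and> f x1 y1 z1 \<and> g x2 y2 z2)"

lemma tensor3I: "f x1 y1 z1 \<Longrightarrow> g x2 y2 z2 \<Longrightarrow> tensor3 f g (x1 \<or> x2) (y1 \<or> y2) (z1 \<or> z2)"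
  unfolding tensor3_def by blast

lemma sem_pq_Conj: "sem_pq p q (Conj F G) = (\<lambda>x y z. sem_pq p q F x y z \<and> sem_pq p q G x y z)"
  by (simp add: sem_pq_def fun_eq_iff)

lemma sem_pq_Tensor: "sem_pq p q (Tensor F G) = tensor3 (sem_pq p q F) (sem_pq p q G)"
proof (intro ext iffI)
  fix x y z
  assume "sem_pq p q (Tensor F G) x y z"
  then obtain t1 t2 where split: "team3 x y z = t1 \<union> t2"
    and F: "supp (V_pq p q) t1 F" and G: "supp (V_pq p q) t2 G"
    by (auto simp: sem_pq_def)
  have "t1 \<subseteq> W_pq" "t2 \<subseteq> W_pq"
    using split team3_subset_W_pq by blast+
  then have "t1 = team3 (1 \<in> t1) (2 \<in> t1) (3 \<in> t1)" "t2 = team3 (1 \<in> t2) (2 \<in> t2) (3 \<in> t2)"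
    using subset_W_pq_eq_team3 by blast+
  moreover have "x = (1 \<in> t1 \<or> 1 \<in> t2)" "y = (2 \<in> t1 \<or> 2 \<in> t2)" "z = (3 \<in> t1 \<or> 3 \<in> t2)"
    using split team3_memberships by (metis Un_iff)+
  ultimately show "tensor3 (sem_pq p q F) (sem_pq p q G) x y z"
    unfolding tensor3_def sem_pq_def using F G by metis
next
  fix x y z
  assume "tensor3 (sem_pq p q F) (sem_pq p q G) x y z"
  then obtain x1 y1 z1 x2 y2 z2
    where "x = (x1 \<or> x2)" "y = (y1 \<or> y2)" "z = (z1 \<or> z2)"
      and F: "sem_pq p q F x1 y1 z1" and G: "sem_pq p q G x2 y2 z2"
    unfolding tensor3_def by blast
  then have "team3 x y z = team3 x1 y1 z1 \<union> team3 x2 y2 z2"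
    by (simp add: team3_Un)
  then show "sem_pq p q (Tensor F G) x y z"
    using F G unfolding sem_pq_def supp.simps by blast
qed

lemma V_pq_other: "r \<noteq> p \<Longrightarrow> r \<noteq> q \<Longrightarrow> r \<notin> V_pq p q w"
  by (simp add: V_pq_def)

definition top3 :: "bool \<Rightarrow> bool \<Rightarrow> bool \<Rightarrow> bool" where
  "top3 x y z = True"

definition empty3 :: "bool \<Rightarrow> bool \<Rightarrow> bool \<Rightarrow> bool" where
  "empty3 x y z = (\<not> x \<and> \<not> y \<and> \<not> z)"

text \<open>World 3 is the only world without p and world 1 the only one without q, so =(p) fails
exactly on teams containing world 3 and another world, and dually for =(q).\<close>

definition const_p3 :: "bool \<Rightarrow> bool \<Rightarrow> bool \<Rightarrow> bool" where
  "const_p3 x y z = (\<not> (x \<and> z) \<and> \<not> (y \<and> z))"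

definition const_q3 :: "bool \<Rightarrow> bool \<Rightarrow> bool \<Rightarrow> bool" where
  "const_q3 x y z = (\<not> (x \<and> y) \<and> \<not> (x \<and> z))"

definition const_pq3 :: "bool \<Rightarrow> bool \<Rightarrow> bool \<Rightarrow> bool" where
  "const_pq3 x y z = (const_p3 x y z \<and> const_q3 x y z)"

definition not_full3 :: "bool \<Rightarrow> bool \<Rightarrow> bool \<Rightarrow> bool" where
  "not_full3 x y z = (\<not> (x \<and> y \<and> z))"

lemmas preds3_defs = top3_def empty3_def const_p3_def const_q3_def const_pq3_def not_full3_def

definition preds_pq :: "(bool \<Rightarrow> bool \<Rightarrow> bool \<Rightarrow> bool) set" where
  "preds_pq = {top3, not_full3, const_p3, const_q3, const_pq3, empty3}"

lemma preds_pq_Conj_closed: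
  "f \<in> preds_pq \<Longrightarrow> g \<in> preds_pq \<Longrightarrow> (\<lambda>x y z. f x y z \<and> g x y z) \<in> preds_pq"
  unfolding preds_pq_def
  by (elim insertE emptyE; simp add: preds3_defs fun_eq_iff all_bool_eq; blast)

lemma preds_pq_tensor3_closed: "f \<in> preds_pq \<Longrightarrow> g \<in> preds_pq \<Longrightarrow> tensor3 f g \<in> preds_pq"
  unfolding preds_pq_def
  by (elim insertE emptyE; simp add: tensor3_def preds3_defs fun_eq_iff all_bool_eq ex_bool_eq)

lemma tensor3_const_pq3: "tensor3 const_pq3 const_pq3 = not_full3"
  by (simp add: tensor3_def preds3_defs fun_eq_iff all_bool_eq ex_bool_eq)

lemma sem_pq_Atom_other: "r \<noteq> p \<Longrightarrow> r \<noteq> q \<Longrightarrow> sem_pq p q (Atom r) = empty3"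
  by (auto simp: sem_pq_def empty3_def fun_eq_iff V_pq_other team3_eq_empty_iff[symmetric])

lemma sem_pq_NAtom_other: "r \<noteq> p \<Longrightarrow> r \<noteq> q \<Longrightarrow> sem_pq p q (NAtom r) = top3"
  by (simp add: sem_pq_def top3_def fun_eq_iff V_pq_other)

lemma sem_pq_Dep_other: "r \<noteq> p \<Longrightarrow> r \<noteq> q \<Longrightarrow> sem_pq p q (Dep ps r) = top3"
  by (simp add: sem_pq_def top3_def fun_eq_iff V_pq_other)

lemma sem_pq_Bot: "sem_pq p q Bot = empty3"
  by (simp add: sem_pq_def empty3_def fun_eq_iff team3_eq_empty_iff)

lemma sem_pq_const_atom_p: "p \<noteq> q \<Longrightarrow> sem_pq p q (const_atom p) = const_p3"
  by (simp add: sem_pq_def const_p3_def fun_eq_iff team3_def V_pq_def all_bool_eq)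

lemma sem_pq_const_atom_q: "p \<noteq> q \<Longrightarrow> sem_pq p q (const_atom q) = const_q3"
  by (simp add: sem_pq_def const_q3_def fun_eq_iff team3_def V_pq_def all_bool_eq)

lemma sem_pq_top_form:
  assumes "p \<noteq> q"
  shows "sem_pq p q (top_form p) = top3"
proof (intro ext)
  fix x y z
  have "sem_pq p q (Atom p) x y False" "sem_pq p q (NAtom p) False False z"
    using assms by (simp_all add: sem_pq_def team3_def V_pq_def)
  then have "tensor3 (sem_pq p q (Atom p)) (sem_pq p q (NAtom p))
      (x \<or> False) (y \<or> False) (False \<or> z)"
    by (rule tensor3I)
  then show "sem_pq p q (top_form p) x y z = top3 x y z"
    by (simp add: top_form_def sem_pq_Tensor top3_def)
qed

lemma sem_pq_subst2_in_preds_pq: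
  assumes "p \<noteq> q" and "is_context a b phi" and "p \<notin> letters phi" and "q \<notin> letters phi"
  shows "sem_pq p q (subst2 a b (const_atom p) (const_atom q) phi) \<in> preds_pq"
  using assms(2-)
proof (induction phi)
  case (Atom r)
  then show ?case
    using assms(1) by (auto simp: preds_pq_def sem_pq_const_atom_p sem_pq_const_atom_q sem_pq_Atom_other)
next
  case (NAtom r)
  then show ?case by (simp add: preds_pq_def sem_pq_NAtom_other)
next
  case Bot
  then show ?case by (simp add: preds_pq_def sem_pq_Bot)
next
  case (Dep ps r)
  then show ?case by (auto simp: preds_pq_def sem_pq_Dep_other)
next
  case (Conj F G)
  then show ?case by (simp add: sem_pq_Conj preds_pq_Conj_closed)
next
  case (Tensor F G)
  then show ?case by (simp add: sem_pq_Tensor preds_pq_tensor3_closed)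
qed

theorem lemma5:
  fixes p q a b :: 'a and phi :: "'a form"
  assumes "p \<noteq> q" and "a \<noteq> b"
    and "is_context a b phi"
    and "p \<notin> letters phi" and "q \<notin> letters phi"
  shows "let F = subst2 a b (const_atom p) (const_atom q) phi;
             E = equiv_in W_pq (V_pq p q) F
         in E (top_form p)
          \<or> E (Tensor (Conj (const_atom p) (const_atom q)) (Conj (const_atom p) (const_atom q)))
          \<or> E (const_atom p)
          \<or> E (const_atom q)
          \<or> E (Conj (const_atom p) (const_atom q))
          \<or> E Bot"
proof -
  have pq: "sem_pq p q (Conj (const_atom p) (const_atom q)) = const_pq3"
    using assms(1)
    by (simp add: sem_pq_Conj sem_pq_const_atom_p sem_pq_const_atom_q const_pq3_def fun_eq_iff)
  have "sem_pq p q (subst2 a b (const_atom p) (const_atom q) phi) \<in> preds_pq"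
    using sem_pq_subst2_in_preds_pq[OF assms(1,3-5)] .
  then show ?thesis
    using assms(1)
    by (simp add: Let_def equiv_in_W_pq_iff_sem_pq_eq preds_pq_def sem_pq_Tensor pq
        tensor3_const_pq3 sem_pq_top_form sem_pq_const_atom_p sem_pq_const_atom_q sem_pq_Bot)
qed

end
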